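(* Let $\mathcal{D}=\mathrm{diag}(u_1,\dots,u_n)$ with all $u_j\neq0$, and let $\mathcal{N}=V_r^{-*}\mathcal{D}^*\mathcal{D}V_r^{-1}$. Then for all integers $\nu_1,\nu_2\ge0$, the pair $(P_\sharp,R_\sharp)$ minimizes $\|E_{\rm TG}^{\nu_1,\nu_2}(P,R)\|_{\mathcal N}$ over all $P,R\in\mathbb{C}^{n\times n_c}$ with $R^*AP$ invertible, i.e. $$(P_\sharp,R_\sharp)\in\operatorname*{argmin}_{P,R\in\mathbb{C}^{n\times n_c}}\|E_{\rm TG}^{\nu_1,\nu_2}(P,R)\|_{\mathcal N},$$ and the minimum value is $|1-\lambda_{n_c+1}|^{\nu_1+\nu_2}$ if $n_c<n$ and $0$ if $n_c=n$.
   Context: Let $A,M\in\mathbb{C}^{n\times n}$ be nonsingular with $M^{-1}A$ and $M^{-*}A^*$ diagonalizable. Let $V_r=[\bm v_{r,1},\dots,\bm v_{r,n}]$ and $V_l=[\bm v_{l,1},\dots,\bm v_{l,n}]$ be invertible matrices of right and left generalized eigenvectors of the pencil $(A,M)$, i.e. $AV_r=MV_r\Lambda$ and $V_l^*A=\Lambda V_l^*M$ with $\Lambda=\mathrm{diag}(\lambda_1,\dots,\lambda_n)$, chosen so that $V_l^*AV_r$ and $V_l^*MV_r$ are diagonal, and ordered so that $|1-\lambda_1|\ge\cdots\ge|1-\lambda_n|\ge0$. Fix $n_c\in\{1,\dots,n\}$. For $P,R\in\mathbb{C}^{n\times n_c}$ with $R^*AP$ invertible, $\Pi(P,R)=P(R^*AP)^{-1}R^*A$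 and $E_{\rm TG}^{\nu_1,\nu_2}(P,R)=(I-M^{-1}A)^{\nu_2}(I-\Pi(P,R))(I-M^{-1}A)^{\nu_1}$. $P_\sharp,R_\sharp\in\mathbb{C}^{n\times n_c}$ are any matrices with $\mathrm{range}(P_\sharp)=\mathrm{span}\{\bm v_{r,1},\dots,\bm v_{r,n_c}\}$, $\mathrm{range}(R_\sharp)=\mathrm{span}\{\bm v_{l,1},\dots,\bm v_{l,n_c}\}$. For Hermitian positive definite $\mathcal N$, $\|x\|_{\mathcal N}=(x^*\mathcal Nx)^{1/2}$ and $\|Z\|_{\mathcal N}=\max_{x\neq0}\|Zx\|_{\mathcal N}/\|x\|_{\mathcal N}$. *)

theory Defs
  imports "Jordan_Normal_Form.Schur_Decomposition"
begin

definition minv :: "complex mat \<Rightarrow> complex mat" where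
  "minv A = (THE B. B \<in> carrier_mat (dim_row A) (dim_row A) \<and>
              A * B = 1\<^sub>m (dim_row A) \<and> B * A = 1\<^sub>m (dim_row A))"

definition diagonalizable :: "complex mat \<Rightarrow> bool" where
  "diagonalizable X = (\<exists>D. diagonal_mat D \<and> similar_mat X D)"

definition col_range :: "complex mat \<Rightarrow> complex vec set" where
  "col_range P = {P *\<^sub>v x | x. x \<in> carrier_vec (dim_col P)}"

definition span_first_cols :: "complex mat \<Rightarrow> nat \<Rightarrow> complex vec set" where
  "span_first_cols V k = {V *\<^sub>v y | y. y \<in> carrier_vec (dim_col V) \<and>
                                   (\<forall>i. k \<le> i \<and> i < dim_col V \<longrightarrow> y $ i = 0)}"

definition vnormN :: "complex mat \<Rightarrow> complex vec \<Rightarrow> real" where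
  "vnormN N x = sqrt (Re (\<Sum>i<dim_vec x. cnj (x $ i) * (N *\<^sub>v x) $ i))"

(* induced operator norm; the max is attained, so Sup = max *)
definition mnormN :: "complex mat \<Rightarrow> complex mat \<Rightarrow> real" where
  "mnormN N Z = Sup {vnormN N (Z *\<^sub>v x) / vnormN N x | x.
                       x \<in> carrier_vec (dim_col Z) \<and> x \<noteq> 0\<^sub>v (dim_col Z)}"

definition PiPR :: "complex mat \<Rightarrow> complex mat \<Rightarrow> complex mat \<Rightarrow> complex mat" where
  "PiPR A P R = P * minv (mat_adjoint R * A * P) * mat_adjoint R * A"

definition E_TG :: "complex mat \<Rightarrow> complex mat \<Rightarrow> nat \<Rightarrow> nat \<Rightarrow> complex mat \<Rightarrow> complex mat \<Rightarrow> complex mat" where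
  "E_TG A M \<nu>1 \<nu>2 P R =
     (let n = dim_row A; S = 1\<^sub>m n - minv M * A in
      (S ^\<^sub>m \<nu>2) * (1\<^sub>m n - PiPR A P R) * (S ^\<^sub>m \<nu>1))"

end

theory Submission
  imports Defs "HOL-Analysis.L2_Norm"
begin

(* In the coordinates c = V_r^{-1} x the N-norm of x is the weighted Euclidean norm
   (sum_i |u_i c_i|^2)^{1/2}, and the smoother S = I - M^{-1} A acts diagonally with the
   factors 1 - lambda_i.  For the sharp pair, I - Pi(P_sharp, R_sharp) is the coordinate
   projection onto the eigenvectors with index at least n_c (because V_l^* A V_r is diagonal),
   so E_TG is diagonal in these coordinates with entries 0 and (1 - lambda_i)^(nu1 + nu2);
   its norm is therefore at most |1 - lambda_{n_c}|^(nu1 + nu2), indices starting at 0.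
   For an arbitrary pair (P, R), the n_c linear conditions R^* A S^nu1 x = 0 have a nonzero
   solution x among the combinations of the first n_c + 1 eigenvectors.  The coarse
   correction leaves S^nu1 x untouched, so E_TG x = S^(nu1 + nu2) x, and the ordering of the
   eigenvalues gives ||E_TG x||_N >= |1 - lambda_{n_c}|^(nu1 + nu2) ||x||_N. *)

lemma mat_diag_mult_vec:
  assumes v: "v \<in> carrier_vec n"
  shows "mat_diag n f *\<^sub>v v = vec n (\<lambda>i. f i * v $ i)"
proof (rule eq_vecI)
  fix i assume "i < dim_vec (vec n (\<lambda>i. f i * v $ i))"
  then have i: "i < n" by simp
  have "(mat_diag n f *\<^sub>v v) $ i = (\<Sum>j\<in>{0..<n}. (if i = j then f j else 0) * v $ j)"
    using i v by (auto simp: mat_diag_def scalar_prod_def)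
  also have "\<dots> = f i * v $ i"
    using i by (subst sum.remove[of _ i]) auto
  finally show "(mat_diag n f *\<^sub>v v) $ i = vec n (\<lambda>i. f i * v $ i) $ i" using i by simp
qed (simp add: mat_diag_def)

lemma mat_diag_mult_vec_mat_diag:
  assumes "v \<in> carrier_vec n"
  shows "mat_diag n f *\<^sub>v (mat_diag n g *\<^sub>v v) = mat_diag n (\<lambda>i. f i * g i) *\<^sub>v v"
  using assms by (simp flip: assoc_mult_mat_vec[of _ n n _ n])

lemma mat_diag_cong: "(\<And>i. i < n \<Longrightarrow> f i = g i) \<Longrightarrow> mat_diag n f = mat_diag n g"
  unfolding mat_diag_def by (intro eq_matI) auto

lemma mult_mat_vec_zero [simp]: "A \<in> carrier_mat m n \<Longrightarrow> A *\<^sub>v 0\<^sub>v n = 0\<^sub>v m"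
  by (intro eq_vecI) (auto simp: scalar_prod_def)

lemma diagonal_mat_eq_mat_diag:
  assumes "D \<in> carrier_mat n n" "diagonal_mat D"
  shows "D = mat_diag n (\<lambda>i. D $$ (i, i))"
  using assms by (intro eq_matI) (auto simp: mat_diag_def diagonal_mat_def)

lemma det_mat_diag: "det (mat_diag n f) = (\<Prod>i<n. f i)"
proof -
  have "upper_triangular (mat_diag n f)" by (auto simp: mat_diag_def)
  then have "det (mat_diag n f) = prod_list (diag_mat (mat_diag n f))"
    by (rule det_upper_triangular[OF _ mat_diag_dim])
  also have "\<dots> = (\<Prod>i<n. f i)"
    by (simp add: diag_mat_def mat_diag_def prod.list_conv_set_nth atLeast0LessThan)
  finally show ?thesis .
qed

lemma assoc_mult_mat_vec3:
  assumes "A \<in> carrier_mat m n" "B \<in> carrier_mat n p" "C \<in> carrier_mat p q" "v \<in> carrier_vec q"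
  shows "A * B * C *\<^sub>v v = A *\<^sub>v (B *\<^sub>v (C *\<^sub>v v))"
proof -
  have "A * B * C *\<^sub>v v = A * B *\<^sub>v (C *\<^sub>v v)"
    by (rule assoc_mult_mat_vec) (use assms in auto)
  also have "\<dots> = A *\<^sub>v (B *\<^sub>v (C *\<^sub>v v))"
    by (rule assoc_mult_mat_vec) (use assms in auto)
  finally show ?thesis .
qed

lemma invertible_mat_inverse:
  fixes A :: "'a::semiring_1 mat"
  assumes A: "A \<in> carrier_mat n n" and "invertible_mat A"
  obtains B where "B \<in> carrier_mat n n" "A * B = 1\<^sub>m n" "B * A = 1\<^sub>m n"
proof -
  obtain B where AB: "A * B = 1\<^sub>m n" and BA: "B * A = 1\<^sub>m (dim_row B)"
    using assms unfolding invertible_mat_def inverts_mat_def by auto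
  have "dim_col B = n" using arg_cong[OF AB, of dim_col] by simp
  moreover have "dim_row B = n" using arg_cong[OF BA, of dim_col] A by simp
  ultimately show thesis using AB BA by (intro that) auto
qed

lemma invertible_mat_iff_det:
  fixes A :: "'a::field mat"
  assumes A: "A \<in> carrier_mat n n"
  shows "invertible_mat A \<longleftrightarrow> det A \<noteq> 0"
proof
  assume "invertible_mat A"
  with A obtain B where "B \<in> carrier_mat n n" "A * B = 1\<^sub>m n" "B * A = 1\<^sub>m n"
    by (rule invertible_mat_inverse)
  then have "det A * det B = 1" using det_mult[OF A] by (metis det_one)
  then show "det A \<noteq> 0" by (metis mult_zero_left zero_neq_one)
next
  assume "det A \<noteq> 0"
  then have "A \<in> Units (ring_mat TYPE('a) n undefined)"
    by (rule det_non_zero_imp_unit[OF A])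
  then obtain B where "B \<in> carrier_mat n n" "A * B = 1\<^sub>m n" "B * A = 1\<^sub>m n"
    by (auto simp: Units_def ring_mat_def)
  then show "invertible_mat A"
    using A unfolding invertible_mat_def inverts_mat_def by auto
qed

lemma invertible_mat_mult:
  fixes A B :: "'a::field mat"
  assumes "A \<in> carrier_mat n n" "B \<in> carrier_mat n n" "invertible_mat A" "invertible_mat B"
  shows "invertible_mat (A * B)"
proof -
  have "det A \<noteq> 0" "det B \<noteq> 0" using assms invertible_mat_iff_det by blast+
  then have "det (A * B) \<noteq> 0" by (simp add: det_mult[OF assms(1,2)])
  then show ?thesis using invertible_mat_iff_det[OF mult_carrier_mat[OF assms(1,2)]] by blast
qed

lemma invertible_mat_mult_vec_eq_zero:
  fixes A :: "'a::field mat"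
  assumes "A \<in> carrier_mat n n" "invertible_mat A" "v \<in> carrier_vec n" "A *\<^sub>v v = 0\<^sub>v n"
  shows "v = 0\<^sub>v n"
proof -
  have "det A \<noteq> 0" using assms(1,2) invertible_mat_iff_det by blast
  then show ?thesis using det_0_iff_vec_prod_zero[OF assms(1)] assms(3,4) by blast
qed

lemma invertible_mat_diag:
  fixes u :: "nat \<Rightarrow> 'a::field"
  assumes "\<forall>i<n. u i \<noteq> 0"
  shows "invertible_mat (mat_diag n u)"
proof -
  have "mat_diag n u * mat_diag n (\<lambda>i. inverse (u i)) = 1\<^sub>m n"
    using assms by (simp add: mat_diag_cong[of n "\<lambda>i. u i * inverse (u i)" "\<lambda>_. 1"])
  then have "det (mat_diag n u) * det (mat_diag n (\<lambda>i. inverse (u i))) = 1"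
    by (metis det_mult det_one mat_diag_dim)
  then show ?thesis by (auto simp: invertible_mat_iff_det[OF mat_diag_dim])
qed

lemma minv_mat:
  assumes A: "A \<in> carrier_mat n n" and inv: "invertible_mat A"
  shows minv_carrier: "minv A \<in> carrier_mat n n"
    and mult_minv: "A * minv A = 1\<^sub>m n"
    and minv_mult: "minv A * A = 1\<^sub>m n"
proof -
  obtain B where B: "B \<in> carrier_mat n n" "A * B = 1\<^sub>m n" "B * A = 1\<^sub>m n"
    using A inv by (rule invertible_mat_inverse)
  have uniq: "C = B" if C: "C \<in> carrier_mat n n" "A * C = 1\<^sub>m n" "C * A = 1\<^sub>m n" for C
  proof -
    have "C = C * (A * B)" using C B by simp
    also have "\<dots> = (C * A) * B" by (rule assoc_mult_mat[OF C(1) A B(1), symmetric])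
    also have "\<dots> = B" using C B by simp
    finally show ?thesis .
  qed
  have "minv A = B" unfolding minv_def carrier_matD(1)[OF A] using B uniq by (intro the_equality) blast+
  then show "minv A \<in> carrier_mat n n" "A * minv A = 1\<^sub>m n" "minv A * A = 1\<^sub>m n"
    using B by simp_all
qed

lemma invertible_mat_minv:
  assumes A: "A \<in> carrier_mat n n" and inv: "invertible_mat A"
  shows "invertible_mat (minv A)"
proof -
  have "det (minv A) * det A = 1"
    using det_mult[OF minv_carrier[OF A inv] A] minv_mult[OF A inv] by (simp add: det_one)
  then have "det (minv A) \<noteq> 0" by (metis mult_zero_left zero_neq_one)
  then show ?thesis using invertible_mat_iff_det[OF minv_carrier[OF A inv]] by simp
qed

lemma adjoint_dim [simp]:
  "dim_row (mat_adjoint A) = dim_col A" "dim_col (mat_adjoint A) = dim_row A"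
  unfolding mat_adjoint_def by auto

lemma adjoint_carrier [simp]: "mat_adjoint A \<in> carrier_mat n m \<longleftrightarrow> A \<in> carrier_mat m n"
  unfolding carrier_mat_def by auto

lemma index_adjoint [simp]:
  "i < dim_col A \<Longrightarrow> j < dim_row A \<Longrightarrow> mat_adjoint A $$ (i, j) = cnj (A $$ (j, i))"
  unfolding mat_adjoint_def by (simp add: mat_of_rows_index)

lemma adjoint_mult:
  assumes A: "(A :: complex mat) \<in> carrier_mat m k" and B: "B \<in> carrier_mat k n"
  shows "mat_adjoint (A * B) = mat_adjoint B * mat_adjoint A"
proof (rule eq_matI)
  fix i j assume "i < dim_row (mat_adjoint B * mat_adjoint A)" "j < dim_col (mat_adjoint B * mat_adjoint A)"
  then have i: "i < n" and j: "j < m" using A B by auto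
  have "mat_adjoint (A * B) $$ (i, j) = (\<Sum>l\<in>{0..<k}. cnj (A $$ (j, l)) * cnj (B $$ (l, i)))"
    using A B i j by (auto simp: scalar_prod_def)
  also have "\<dots> = (mat_adjoint B * mat_adjoint A) $$ (i, j)"
    using A B i j by (auto simp: scalar_prod_def mult.commute intro: sum.cong)
  finally show "mat_adjoint (A * B) $$ (i, j) = (mat_adjoint B * mat_adjoint A) $$ (i, j)" .
qed (use A B in auto)

lemma adjoint_one [simp]: "mat_adjoint (1\<^sub>m n :: complex mat) = 1\<^sub>m n"
  by (rule eq_matI) auto

lemma invertible_mat_adjoint:
  assumes A: "(A :: complex mat) \<in> carrier_mat n n" and inv: "invertible_mat A"
  shows "invertible_mat (mat_adjoint A)"
proof -
  have "mat_adjoint (minv A) * mat_adjoint A = 1\<^sub>m n"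
    using adjoint_mult[OF A minv_carrier[OF A inv]] mult_minv[OF A inv] by simp
  then have "det (mat_adjoint (minv A)) * det (mat_adjoint A) = 1"
    using det_mult[of "mat_adjoint (minv A)" n "mat_adjoint A"] A minv_carrier[OF A inv]
    by (simp add: det_one)
  then have "det (mat_adjoint A) \<noteq> 0" by (metis mult_zero_right zero_neq_one)
  then show ?thesis using invertible_mat_iff_det[of "mat_adjoint A" n] A by simp
qed

lemma sum_cnj_mult_adjoint:
  assumes R: "(R :: complex mat) \<in> carrier_mat m k" and a: "a \<in> carrier_vec k" and w: "w \<in> carrier_vec m"
  shows "(\<Sum>i<k. cnj (a $ i) * (mat_adjoint R *\<^sub>v w) $ i) = (\<Sum>l<m. cnj ((R *\<^sub>v a) $ l) * w $ l)"
proof -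
  have "(\<Sum>i<k. cnj (a $ i) * (mat_adjoint R *\<^sub>v w) $ i)
      = (\<Sum>i<k. \<Sum>l<m. cnj (R $$ (l, i) * a $ i) * w $ l)"
    using R a w by (auto simp: scalar_prod_def atLeast0LessThan sum_distrib_left mult_ac intro!: sum.cong)
  also have "\<dots> = (\<Sum>l<m. \<Sum>i<k. cnj (R $$ (l, i) * a $ i) * w $ l)"
    by (rule sum.swap)
  also have "\<dots> = (\<Sum>l<m. cnj ((R *\<^sub>v a) $ l) * w $ l)"
    using R a w by (auto simp: scalar_prod_def atLeast0LessThan sum_distrib_right intro!: sum.cong)
  finally show ?thesis .
qed

lemma wide_mat_kernel:
  fixes Y :: "'a :: idom mat"
  assumes Y: "Y \<in> carrier_mat k m" and km: "k < m"
  obtains c where "c \<in> carrier_vec m" "c \<noteq> 0\<^sub>v m" "Y *\<^sub>v c = 0\<^sub>v k"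
proof -
  define X where "X = mat\<^sub>r m m (\<lambda>i. if i = m - 1 then 0\<^sub>v m else if i < k then row Y i else 0\<^sub>v m)"
  have X: "X \<in> carrier_mat m m" unfolding X_def by simp
  have "det X = 0" unfolding X_def
    by (rule det_row_0) (use Y km in auto)
  then obtain c where c: "c \<in> carrier_vec m" "c \<noteq> 0\<^sub>v m" "X *\<^sub>v c = 0\<^sub>v m"
    using det_0_iff_vec_prod_zero[OF X] by auto
  have "Y *\<^sub>v c = 0\<^sub>v k"
  proof (rule eq_vecI)
    fix i assume "i < dim_vec (0\<^sub>v k :: 'a vec)"
    then have i: "i < k" by simp
    have "(Y *\<^sub>v c) $ i = (X *\<^sub>v c) $ i"
      using Y i km by (simp add: X_def row_mat_of_row_fun)
    then show "(Y *\<^sub>v c) $ i = 0\<^sub>v k $ i" using c(3) i km by simp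
  qed (use Y in simp)
  with c show thesis by (intro that)
qed

section \<open>Column ranges\<close>

lemma col_range_subset_factor:
  assumes B: "B \<in> carrier_mat n k" and P: "P \<in> carrier_mat n m"
    and sub: "col_range B \<subseteq> col_range P"
  obtains Z where "Z \<in> carrier_mat m k" "B = P * Z"
proof -
  have "\<exists>z. z \<in> carrier_vec m \<and> P *\<^sub>v z = col B j" if j: "j < k" for j
  proof -
    have "B *\<^sub>v unit_vec k j = col B j" using B j by (intro eq_vecI) auto
    moreover have "B *\<^sub>v unit_vec k j \<in> col_range B"
      using B unfolding col_range_def by auto
    ultimately have "col B j \<in> col_range P" using sub by auto
    then show ?thesis using P unfolding col_range_def by auto
  qed
  then obtain z where z: "\<And>j. j < k \<Longrightarrow> z j \<in> carrier_vec m \<and> P *\<^sub>v z j = col B j"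
    by metis
  define Z where "Z = mat m k (\<lambda>(i, j). z j $ i)"
  have "B = P * Z"
  proof (rule eq_matI)
    fix i j assume "i < dim_row (P * Z)" "j < dim_col (P * Z)"
    then have i: "i < n" and j: "j < k" using P by (auto simp: Z_def)
    have "col Z j = z j" using z[OF j] j unfolding Z_def by (intro eq_vecI) auto
    then have "(P * Z) $$ (i, j) = (P *\<^sub>v z j) $ i" using P i j by (auto simp: Z_def)
    then show "B $$ (i, j) = (P * Z) $$ (i, j)" using z[OF j] B i j by simp
  qed (use B P in \<open>auto simp: Z_def\<close>)
  then show thesis by (intro that) (auto simp: Z_def)
qed

lemma mult_if_one_zero:
  fixes x :: complex
  shows "(if P then 1 else 0) * x = (if P then x else 0)" "x * (if P then 1 else 0) = (if P then x else 0)"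
  "cnj (if P then 1 else 0) = (if P then 1 else 0)"
  by simp_all

definition incl_mat :: "nat \<Rightarrow> nat \<Rightarrow> complex mat" where
  "incl_mat n k = mat n k (\<lambda>(i, j). if i = j then 1 else 0)"

lemma incl_mat_dim [simp]: "dim_row (incl_mat n k) = n" "dim_col (incl_mat n k) = k"
  unfolding incl_mat_def by simp_all

lemma incl_mat_carrier [simp]: "incl_mat n k \<in> carrier_mat n k"
  unfolding incl_mat_def by simp

lemma incl_mat_mult_vec:
  assumes c: "c \<in> carrier_vec k" and k: "k \<le> n"
  shows "incl_mat n k *\<^sub>v c = vec n (\<lambda>i. if i < k then c $ i else 0)"
proof (rule eq_vecI)
  fix i assume "i < dim_vec (vec n (\<lambda>i. if i < k then c $ i else 0))"
  then have i: "i < n" by simp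
  have "(incl_mat n k *\<^sub>v c) $ i = (\<Sum>j\<in>{0..<k}. (if i = j then 1 else 0) * c $ j)"
    using i c by (auto simp: incl_mat_def scalar_prod_def)
  also have "\<dots> = (if i < k then c $ i else 0)"
    by (simp add: mult_if_one_zero sum.delta)
  finally show "(incl_mat n k *\<^sub>v c) $ i = vec n (\<lambda>i. if i < k then c $ i else 0) $ i"
    using i by simp
qed (simp add: incl_mat_def)

lemma adjoint_incl_mat_mult:
  assumes C: "(C :: complex mat) \<in> carrier_mat n m" and k: "k \<le> n"
  shows "mat_adjoint (incl_mat n k) * C = mat k m (\<lambda>(i, j). C $$ (i, j))"
proof (rule eq_matI)
  fix i j assume "i < dim_row (mat k m (\<lambda>(i, j). C $$ (i, j)))" "j < dim_col (mat k m (\<lambda>(i, j). C $$ (i, j)))"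
  then have i: "i < k" and j: "j < m" by auto
  have "(mat_adjoint (incl_mat n k) * C) $$ (i, j) = (\<Sum>l\<in>{0..<n}. (if l = i then 1 else 0) * C $$ (l, j))"
    using C i j k by (auto simp: incl_mat_def scalar_prod_def intro!: sum.cong)
  also have "\<dots> = C $$ (i, j)" using i k by (simp add: mult_if_one_zero sum.delta)
  finally show "(mat_adjoint (incl_mat n k) * C) $$ (i, j) = mat k m (\<lambda>(i, j). C $$ (i, j)) $$ (i, j)"
    using i j by simp
qed (use C in auto)

lemma mult_incl_mat:
  assumes C: "C \<in> carrier_mat m n" and k: "k \<le> n"
  shows "C * incl_mat n k = mat m k (\<lambda>(i, j). C $$ (i, j))"
proof (rule eq_matI)
  fix i j assume "i < dim_row (mat m k (\<lambda>(i, j). C $$ (i, j)))" "j < dim_col (mat m k (\<lambda>(i, j). C $$ (i, j)))"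
  then have i: "i < m" and j: "j < k" by auto
  have "(C * incl_mat n k) $$ (i, j) = (\<Sum>l\<in>{0..<n}. C $$ (i, l) * (if l = j then 1 else 0))"
    using C i j k by (auto simp: incl_mat_def scalar_prod_def intro!: sum.cong)
  also have "\<dots> = C $$ (i, j)" using j k by (simp add: mult_if_one_zero sum.delta)
  finally show "(C * incl_mat n k) $$ (i, j) = mat m k (\<lambda>(i, j). C $$ (i, j)) $$ (i, j)"
    using i j by simp
qed (use C in auto)

lemma adjoint_incl_mat_mult_vec:
  assumes v: "v \<in> carrier_vec n" and k: "k \<le> n"
  shows "mat_adjoint (incl_mat n k) *\<^sub>v v = vec k (\<lambda>i. v $ i)"
proof (rule eq_vecI)
  fix i assume "i < dim_vec (vec k (\<lambda>i. v $ i))"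
  then have i: "i < k" by simp
  have "(mat_adjoint (incl_mat n k) *\<^sub>v v) $ i = (\<Sum>l\<in>{0..<n}. (if l = i then 1 else 0) * v $ l)"
    using v i k by (auto simp: incl_mat_def scalar_prod_def intro!: sum.cong)
  also have "\<dots> = v $ i" using i k by (simp add: mult_if_one_zero sum.delta)
  finally show "(mat_adjoint (incl_mat n k) *\<^sub>v v) $ i = vec k (\<lambda>i. v $ i) $ i" using i by simp
qed simp

lemma span_first_cols_eq_col_range:
  assumes V: "V \<in> carrier_mat n n" and k: "k \<le> n"
  shows "span_first_cols V k = col_range (V * incl_mat n k)"
proof (intro equalityI subsetI)
  fix x assume "x \<in> span_first_cols V k"
  then obtain y where y: "y \<in> carrier_vec n" "\<forall>i. k \<le> i \<and> i < n \<longrightarrow> y $ i = 0" and x: "x = V *\<^sub>v y"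
    using V unfolding span_first_cols_def by auto
  have "incl_mat n k *\<^sub>v vec k (\<lambda>i. y $ i) = y"
    using y k by (auto simp: incl_mat_mult_vec intro!: eq_vecI)
  then have "x = V * incl_mat n k *\<^sub>v vec k (\<lambda>i. y $ i)"
    using x assoc_mult_mat_vec[OF V incl_mat_carrier, of "vec k (\<lambda>i. y $ i)"] by simp
  then show "x \<in> col_range (V * incl_mat n k)"
    unfolding col_range_def by fastforce
next
  fix x assume "x \<in> col_range (V * incl_mat n k)"
  then obtain c where c: "c \<in> carrier_vec k" and x: "x = V * incl_mat n k *\<^sub>v c"
    using V unfolding col_range_def by auto
  then have "x = V *\<^sub>v (incl_mat n k *\<^sub>v c)" using assoc_mult_mat_vec[OF V incl_mat_carrier c] by simp
  then show "x \<in> span_first_cols V k"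
    using V c k unfolding span_first_cols_def by (auto simp: incl_mat_mult_vec)
qed

lemma span_first_cols_factor:
  assumes V: "V \<in> carrier_mat n n" and k: "k \<le> n" and P: "P \<in> carrier_mat n k"
    and P_range: "col_range P = span_first_cols V k"
  obtains Z Y where "Z \<in> carrier_mat k k" "V * incl_mat n k = P * Z"
    "Y \<in> carrier_mat k k" "P = V * incl_mat n k * Y"
proof -
  have range: "col_range P = col_range (V * incl_mat n k)"
    using P_range span_first_cols_eq_col_range[OF V k] by simp
  have Vk: "V * incl_mat n k \<in> carrier_mat n k" using V by simp
  obtain Z where "Z \<in> carrier_mat k k" "V * incl_mat n k = P * Z"
    using col_range_subset_factor[OF Vk P] range by auto
  moreover obtain Y where "Y \<in> carrier_mat k k" "P = V * incl_mat n k * Y"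
    using col_range_subset_factor[OF P Vk] range by auto
  ultimately show thesis by (rule that)
qed

section \<open>Operator norms induced by a Gram matrix\<close>

definition l2_norm_vec :: "complex vec \<Rightarrow> real" where
  "l2_norm_vec v = L2_set (\<lambda>i. cmod (v $ i)) {..<dim_vec v}"

lemma l2_norm_vec_nonneg [simp]: "0 \<le> l2_norm_vec v"
  unfolding l2_norm_vec_def by simp

lemma l2_norm_vec_pos:
  assumes "v \<in> carrier_vec n" "v \<noteq> 0\<^sub>v n"
  shows "0 < l2_norm_vec v"
proof -
  have "l2_norm_vec v \<noteq> 0"
    using assms by (auto simp: l2_norm_vec_def L2_set_eq_0_iff intro!: eq_vecI)
  then show ?thesis unfolding l2_norm_vec_def by (simp add: order_le_neq_trans)
qed

lemma l2_norm_vec_vec [simp]: "l2_norm_vec (vec n f) = L2_set (\<lambda>i. cmod (f i)) {..<n}"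
  unfolding l2_norm_vec_def by (auto intro!: L2_set_cong)

lemma l2_norm_mult_mat_vec_le:
  assumes H: "H \<in> carrier_mat m n"
  obtains K where "\<And>y. y \<in> carrier_vec n \<Longrightarrow> l2_norm_vec (H *\<^sub>v y) \<le> K * l2_norm_vec y"
proof
  fix y :: "complex vec" assume y: "y \<in> carrier_vec n"
  have y_le: "cmod (y $ j) \<le> l2_norm_vec y" if "j < n" for j
    using y that unfolding l2_norm_vec_def by (intro member_le_L2_set) auto
  have "dim_vec (H *\<^sub>v y) = m" using H by simp
  then have "l2_norm_vec (H *\<^sub>v y) \<le> (\<Sum>i<m. cmod ((H *\<^sub>v y) $ i))"
    unfolding l2_norm_vec_def by (simp only:) (rule L2_set_le_sum, simp)
  also have "\<dots> \<le> (\<Sum>i<m. \<Sum>j<n. cmod (H $$ (i, j)) * cmod (y $ j))"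
  proof (rule sum_mono)
    fix i assume "i \<in> {..<m}"
    then have "(H *\<^sub>v y) $ i = (\<Sum>j<n. H $$ (i, j) * y $ j)"
      using H y by (auto simp: scalar_prod_def atLeast0LessThan)
    then show "cmod ((H *\<^sub>v y) $ i) \<le> (\<Sum>j<n. cmod (H $$ (i, j)) * cmod (y $ j))"
      by (metis (no_types, lifting) norm_mult norm_sum sum.cong)
  qed
  also have "\<dots> \<le> (\<Sum>i<m. \<Sum>j<n. cmod (H $$ (i, j)) * l2_norm_vec y)"
    by (intro sum_mono mult_left_mono y_le) auto
  also have "\<dots> = (\<Sum>i<m. \<Sum>j<n. cmod (H $$ (i, j))) * l2_norm_vec y"
    by (simp add: sum_distrib_right)
  finally show "l2_norm_vec (H *\<^sub>v y) \<le> (\<Sum>i<m. \<Sum>j<n. cmod (H $$ (i, j))) * l2_norm_vec y" .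
qed

lemma vnormN_gram:
  assumes B: "B \<in> carrier_mat m n" and x: "x \<in> carrier_vec n"
  shows "vnormN (mat_adjoint B * B) x = l2_norm_vec (B *\<^sub>v x)"
proof -
  have "(\<Sum>i<n. cnj (x $ i) * (mat_adjoint B * B *\<^sub>v x) $ i)
      = (\<Sum>i<n. cnj (x $ i) * (mat_adjoint B *\<^sub>v (B *\<^sub>v x)) $ i)"
    using B x by (subst assoc_mult_mat_vec[of _ n m _ n]) auto
  also have "\<dots> = (\<Sum>l<m. cnj ((B *\<^sub>v x) $ l) * (B *\<^sub>v x) $ l)"
    using B x by (intro sum_cnj_mult_adjoint) auto
  also have "\<dots> = (\<Sum>l<m. complex_of_real (cmod ((B *\<^sub>v x) $ l) ^ 2))"
    by (intro sum.cong refl, subst complex_norm_square) (simp add: mult.commute)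
  finally show ?thesis
    using B x by (simp add: vnormN_def l2_norm_vec_def L2_set_def)
qed

lemma mnormN_gram_le:
  assumes B: "B \<in> carrier_mat n n" "invertible_mat B" and Z: "Z \<in> carrier_mat n n" and n: "0 < n"
    and le: "\<And>x. x \<in> carrier_vec n \<Longrightarrow> l2_norm_vec (B *\<^sub>v (Z *\<^sub>v x)) \<le> b * l2_norm_vec (B *\<^sub>v x)"
  shows "mnormN (mat_adjoint B * B) Z \<le> b"
  unfolding mnormN_def
proof (rule cSup_least)
  show "{vnormN (mat_adjoint B * B) (Z *\<^sub>v x) / vnormN (mat_adjoint B * B) x | x.
          x \<in> carrier_vec (dim_col Z) \<and> x \<noteq> 0\<^sub>v (dim_col Z)} \<noteq> {}"
    using Z n by (auto intro!: exI[of _ "unit_vec n 0"])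
next
  fix r assume "r \<in> {vnormN (mat_adjoint B * B) (Z *\<^sub>v x) / vnormN (mat_adjoint B * B) x | x.
          x \<in> carrier_vec (dim_col Z) \<and> x \<noteq> 0\<^sub>v (dim_col Z)}"
  then obtain x where x: "x \<in> carrier_vec n" "x \<noteq> 0\<^sub>v n"
    and r: "r = l2_norm_vec (B *\<^sub>v (Z *\<^sub>v x)) / l2_norm_vec (B *\<^sub>v x)"
    using B Z by (auto simp: vnormN_gram)
  have "B *\<^sub>v x \<noteq> 0\<^sub>v n" using invertible_mat_mult_vec_eq_zero[OF B x(1)] x(2) by blast
  then have "0 < l2_norm_vec (B *\<^sub>v x)" using B x by (intro l2_norm_vec_pos[of _ n]) auto
  then show "r \<le> b" unfolding r using le[OF x(1)] by (simp add: divide_le_eq)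
qed

lemma mnormN_gram_ge:
  assumes B: "B \<in> carrier_mat n n" "invertible_mat B" and Z: "Z \<in> carrier_mat n n"
    and x: "x \<in> carrier_vec n" "x \<noteq> 0\<^sub>v n"
    and ge: "b * l2_norm_vec (B *\<^sub>v x) \<le> l2_norm_vec (B *\<^sub>v (Z *\<^sub>v x))"
  shows "b \<le> mnormN (mat_adjoint B * B) Z"
proof -
  have pos: "0 < l2_norm_vec (B *\<^sub>v y)" if y: "y \<in> carrier_vec n" "y \<noteq> 0\<^sub>v n" for y
  proof (rule l2_norm_vec_pos)
    show "B *\<^sub>v y \<in> carrier_vec n" using B y by simp
    show "B *\<^sub>v y \<noteq> 0\<^sub>v n" using invertible_mat_mult_vec_eq_zero[OF B y(1)] y(2) by blast
  qed
  define ratios where "ratios = {vnormN (mat_adjoint B * B) (Z *\<^sub>v y) / vnormN (mat_adjoint B * B) y | y.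
          y \<in> carrier_vec (dim_col Z) \<and> y \<noteq> 0\<^sub>v (dim_col Z)}"
  have ratio: "vnormN (mat_adjoint B * B) (Z *\<^sub>v y) / vnormN (mat_adjoint B * B) y
      = l2_norm_vec (B *\<^sub>v (Z *\<^sub>v y)) / l2_norm_vec (B *\<^sub>v y)" if "y \<in> carrier_vec n" for y
    using B Z that by (simp add: vnormN_gram)
  obtain K where K: "\<And>y. y \<in> carrier_vec n \<Longrightarrow>
      l2_norm_vec (B * Z * minv B *\<^sub>v y) \<le> K * l2_norm_vec y"
    using l2_norm_mult_mat_vec_le[OF mult_carrier_mat[OF mult_carrier_mat[OF B(1) Z] minv_carrier[OF B]]]
    by blast
  have "bdd_above ratios"
  proof (rule bdd_aboveI)
    fix r assume "r \<in> ratios"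
    then obtain y where y: "y \<in> carrier_vec n" "y \<noteq> 0\<^sub>v n"
      and r: "r = l2_norm_vec (B *\<^sub>v (Z *\<^sub>v y)) / l2_norm_vec (B *\<^sub>v y)"
      using Z ratio unfolding ratios_def by auto
    have "B * Z * minv B *\<^sub>v (B *\<^sub>v y) = B * Z *\<^sub>v (minv B *\<^sub>v (B *\<^sub>v y))"
      using B Z y minv_carrier[OF B] by (intro assoc_mult_mat_vec) auto
    also have "minv B *\<^sub>v (B *\<^sub>v y) = y"
      using B y minv_carrier[OF B] minv_mult[OF B] by (simp flip: assoc_mult_mat_vec[of _ n n _ n])
    also have "B * Z *\<^sub>v y = B *\<^sub>v (Z *\<^sub>v y)"
      using B Z y by (intro assoc_mult_mat_vec) auto
    finally have "B *\<^sub>v (Z *\<^sub>v y) = B * Z * minv B *\<^sub>v (B *\<^sub>v y)" ..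
    then have "l2_norm_vec (B *\<^sub>v (Z *\<^sub>v y)) \<le> K * l2_norm_vec (B *\<^sub>v y)"
      using K B y by simp
    then show "r \<le> K" unfolding r using pos[OF y] by (simp add: divide_le_eq)
  qed
  moreover have "l2_norm_vec (B *\<^sub>v (Z *\<^sub>v x)) / l2_norm_vec (B *\<^sub>v x) \<in> ratios"
    using Z x ratio unfolding ratios_def by fastforce
  ultimately have "l2_norm_vec (B *\<^sub>v (Z *\<^sub>v x)) / l2_norm_vec (B *\<^sub>v x) \<le> mnormN (mat_adjoint B * B) Z"
    unfolding mnormN_def ratios_def by (rule cSup_upper[rotated])
  moreover have "b \<le> l2_norm_vec (B *\<^sub>v (Z *\<^sub>v x)) / l2_norm_vec (B *\<^sub>v x)"
    using ge pos[OF x] by (simp add: le_divide_eq)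
  ultimately show ?thesis by linarith
qed

lemma mnormN_le_eigen:
  assumes B: "B \<in> carrier_mat n n" "invertible_mat B"
    and V: "V \<in> carrier_mat n n" "invertible_mat V" and BV: "B * V = mat_diag n u"
    and Z: "Z \<in> carrier_mat n n"
    and ZV: "\<And>c. c \<in> carrier_vec n \<Longrightarrow> Z *\<^sub>v (V *\<^sub>v c) = V *\<^sub>v (mat_diag n g *\<^sub>v c)"
    and g: "\<And>i. i < n \<Longrightarrow> cmod (g i) \<le> b" and n: "0 < n"
  shows "mnormN (mat_adjoint B * B) Z \<le> b"
proof (rule mnormN_gram_le[OF B Z n])
  fix x :: "complex vec" assume x: "x \<in> carrier_vec n"
  define c where "c = minv V *\<^sub>v x"
  have c: "c \<in> carrier_vec n" using minv_carrier[OF V] x by (simp add: c_def)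
  have x_eq: "x = V *\<^sub>v c"
    using V x minv_carrier[OF V] mult_minv[OF V] by (simp add: c_def flip: assoc_mult_mat_vec[of _ n n _ n])
  have BV_vec: "B *\<^sub>v (V *\<^sub>v d) = mat_diag n u *\<^sub>v d" if "d \<in> carrier_vec n" for d
    using B V that BV by (simp flip: assoc_mult_mat_vec[of _ n n _ n])
  have "0 \<le> b" using g[OF n] norm_ge_zero order_trans by blast
  have "l2_norm_vec (B *\<^sub>v (Z *\<^sub>v x)) = L2_set (\<lambda>i. cmod (u i * (g i * c $ i))) {..<n}"
    using c by (simp add: x_eq ZV BV_vec mat_diag_mult_vec, intro L2_set_cong, auto)
  also have "\<dots> \<le> L2_set (\<lambda>i. b * cmod (u i * c $ i)) {..<n}"
    by (rule L2_set_mono) (auto simp: norm_mult mult.left_commute intro!: mult_right_mono g)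
  also have "\<dots> = b * l2_norm_vec (B *\<^sub>v x)"
    using c \<open>0 \<le> b\<close> by (simp add: x_eq BV_vec mat_diag_mult_vec L2_set_right_distrib)
  finally show "l2_norm_vec (B *\<^sub>v (Z *\<^sub>v x)) \<le> b * l2_norm_vec (B *\<^sub>v x)" .
qed

lemma mnormN_ge_eigen:
  assumes B: "B \<in> carrier_mat n n" "invertible_mat B"
    and V: "V \<in> carrier_mat n n" and BV: "B * V = mat_diag n u"
    and Z: "Z \<in> carrier_mat n n" and c: "c \<in> carrier_vec n" and Vc: "V *\<^sub>v c \<noteq> 0\<^sub>v n"
    and ZV: "Z *\<^sub>v (V *\<^sub>v c) = V *\<^sub>v (mat_diag n g *\<^sub>v c)"
    and b: "0 \<le> b" and g: "\<And>i. i < n \<Longrightarrow> c $ i \<noteq> 0 \<Longrightarrow> b \<le> cmod (g i)"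
  shows "b \<le> mnormN (mat_adjoint B * B) Z"
proof (rule mnormN_gram_ge[OF B Z _ Vc])
  have BV_vec: "B *\<^sub>v (V *\<^sub>v d) = mat_diag n u *\<^sub>v d" if "d \<in> carrier_vec n" for d
    using B V that BV by (simp flip: assoc_mult_mat_vec[of _ n n _ n])
  have "b * l2_norm_vec (B *\<^sub>v (V *\<^sub>v c)) = L2_set (\<lambda>i. b * cmod (u i * c $ i)) {..<n}"
    using c b by (simp add: BV_vec mat_diag_mult_vec L2_set_right_distrib)
  also have "\<dots> \<le> L2_set (\<lambda>i. cmod (u i * (g i * c $ i))) {..<n}"
  proof (rule L2_set_mono)
    fix i assume "i \<in> {..<n}"
    then show "b * cmod (u i * c $ i) \<le> cmod (u i * (g i * c $ i))"
      using g[of i] by (cases "c $ i = 0") (auto simp: norm_mult mult.left_commute intro!: mult_right_mono)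
  qed (use b in simp)
  also have "\<dots> = l2_norm_vec (B *\<^sub>v (Z *\<^sub>v (V *\<^sub>v c)))"
    using c by (simp add: ZV BV_vec mat_diag_mult_vec, intro L2_set_cong, auto)
  finally show "b * l2_norm_vec (B *\<^sub>v (V *\<^sub>v c)) \<le> l2_norm_vec (B *\<^sub>v (Z *\<^sub>v (V *\<^sub>v c)))" .
qed (use V c in simp)

lemma weighted_eigen_gram:
  assumes V: "V \<in> carrier_mat n n" "invertible_mat V" and u: "\<forall>i<n. u i \<noteq> 0"
  obtains B where "B \<in> carrier_mat n n" "invertible_mat B" "B * V = mat_diag n u"
    "mat_adjoint (minv V) * mat_adjoint (mat_diag n u) * mat_diag n u * minv V = mat_adjoint B * B"
proof
  note W = minv_carrier[OF V]
  show "mat_diag n u * minv V \<in> carrier_mat n n" by (rule mult_carrier_mat[OF mat_diag_dim W])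
  show "invertible_mat (mat_diag n u * minv V)"
    by (rule invertible_mat_mult[OF mat_diag_dim W invertible_mat_diag[OF u] invertible_mat_minv[OF V]])
  show "mat_diag n u * minv V * V = mat_diag n u"
    using W V minv_mult[OF V]
    by (simp add: assoc_mult_mat[of _ n n _ n _ n] right_mult_one_mat[OF mat_diag_dim])
  show "mat_adjoint (minv V) * mat_adjoint (mat_diag n u) * mat_diag n u * minv V
      = mat_adjoint (mat_diag n u * minv V) * (mat_diag n u * minv V)"
    unfolding adjoint_mult[OF mat_diag_dim W]
    by (rule assoc_mult_mat[OF mult_carrier_mat mat_diag_dim W]) (use W adjoint_carrier[of _ n n] in auto)
qed

section \<open>The coarse-grid projection\<close>

lemma coarse_mat_carrier:
  assumes "A \<in> carrier_mat n n" "P \<in> carrier_mat n k" "R \<in> carrier_mat n k"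
  shows "mat_adjoint R * A * P \<in> carrier_mat k k"
  using assms by auto

lemma PiPR_carrier:
  assumes "A \<in> carrier_mat n n" "P \<in> carrier_mat n k"
  shows "PiPR A P R \<in> carrier_mat n n"
  using assms unfolding PiPR_def by auto

lemma PiPR_mult_vec:
  assumes A: "A \<in> carrier_mat n n" and P: "P \<in> carrier_mat n k" and R: "R \<in> carrier_mat n k"
    and inv: "invertible_mat (mat_adjoint R * A * P)" and w: "w \<in> carrier_vec n"
  shows "PiPR A P R *\<^sub>v w = P *\<^sub>v (minv (mat_adjoint R * A * P) *\<^sub>v (mat_adjoint R *\<^sub>v (A *\<^sub>v w)))"
proof -
  note X = minv_carrier[OF coarse_mat_carrier[OF A P R] inv]
  have "PiPR A P R *\<^sub>v w = P * minv (mat_adjoint R * A * P) * mat_adjoint R *\<^sub>v (A *\<^sub>v w)"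
    unfolding PiPR_def using P X R A w by (intro assoc_mult_mat_vec) auto
  also have "\<dots> = P * minv (mat_adjoint R * A * P) *\<^sub>v (mat_adjoint R *\<^sub>v (A *\<^sub>v w))"
    using P X R A w by (intro assoc_mult_mat_vec) auto
  also have "\<dots> = P *\<^sub>v (minv (mat_adjoint R * A * P) *\<^sub>v (mat_adjoint R *\<^sub>v (A *\<^sub>v w)))"
    using P X R A w by (intro assoc_mult_mat_vec) auto
  finally show ?thesis .
qed

lemma PiPR_fixes_range:
  assumes A: "A \<in> carrier_mat n n" and P: "P \<in> carrier_mat n k" and R: "R \<in> carrier_mat n k"
    and inv: "invertible_mat (mat_adjoint R * A * P)" and z: "z \<in> carrier_vec k"
  shows "PiPR A P R *\<^sub>v (P *\<^sub>v z) = P *\<^sub>v z"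
proof -
  note X = coarse_mat_carrier[OF A P R]
  have "mat_adjoint R *\<^sub>v (A *\<^sub>v (P *\<^sub>v z)) = mat_adjoint R * A * P *\<^sub>v z"
    using A P R z by (intro assoc_mult_mat_vec3[symmetric]) auto
  moreover have "minv (mat_adjoint R * A * P) *\<^sub>v (mat_adjoint R * A * P *\<^sub>v z) = z"
    using X z minv_carrier[OF X inv] minv_mult[OF X inv] by (simp flip: assoc_mult_mat_vec[of _ k k _ k])
  ultimately show ?thesis
    using A P z by (simp add: PiPR_mult_vec[OF A P R inv])
qed

lemma PiPR_annihilates:
  assumes A: "A \<in> carrier_mat n n" and P: "P \<in> carrier_mat n k" and R: "R \<in> carrier_mat n k"
    and inv: "invertible_mat (mat_adjoint R * A * P)" and w: "w \<in> carrier_vec n"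
    and Rw: "mat_adjoint R *\<^sub>v (A *\<^sub>v w) = 0\<^sub>v k"
  shows "PiPR A P R *\<^sub>v w = 0\<^sub>v n"
  using P minv_carrier[OF coarse_mat_carrier[OF A P R] inv]
  by (simp add: PiPR_mult_vec[OF A P R inv w] Rw)

section \<open>Two-grid error propagation in an eigenbasis of the pencil\<close>

locale pencil_eigenbases =
  fixes n :: nat and A M Vr Vl :: "complex mat" and lam :: "nat \<Rightarrow> complex"
  assumes A: "A \<in> carrier_mat n n" and M: "M \<in> carrier_mat n n"
    and A_inv: "invertible_mat A" and M_inv: "invertible_mat M"
    and Vr: "Vr \<in> carrier_mat n n" and Vl: "Vl \<in> carrier_mat n n"
    and Vr_inv: "invertible_mat Vr" and Vl_inv: "invertible_mat Vl"
    and right_eig: "A * Vr = M * Vr * mat_diag n lam"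
    and diagonal_AV: "diagonal_mat (mat_adjoint Vl * A * Vr)"
begin

abbreviation smoother :: "complex mat" where
  "smoother \<equiv> 1\<^sub>m n - minv M * A"

lemma A_minv_M_dim [simp]:
  "dim_row A = n" "dim_col A = n" "dim_row (minv M) = n" "dim_col (minv M) = n"
  using A minv_carrier[OF M M_inv] by auto

lemma smoother_carrier [simp]: "smoother \<in> carrier_mat n n"
  by auto

lemma smoother_mult_Vr: "smoother * Vr = Vr * mat_diag n (\<lambda>i. 1 - lam i)"
proof -
  note Mi = minv_carrier[OF M M_inv]
  have "minv M * A * Vr = minv M * (M * (Vr * mat_diag n lam))"
    using Mi A Vr M right_eig by (simp add: assoc_mult_mat[of _ n n _ n _ n])
  also have "\<dots> = (minv M * M) * (Vr * mat_diag n lam)"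
    using Mi M Vr by (simp add: assoc_mult_mat[of _ n n _ n _ n])
  also have "\<dots> = Vr * mat_diag n lam"
    using minv_mult[OF M M_inv] Vr by simp
  finally have "minv M * A * Vr = Vr * mat_diag n lam" .
  then have "smoother * Vr = Vr - Vr * mat_diag n lam"
    using minus_mult_distrib_mat[OF one_carrier_mat mult_carrier_mat[OF Mi A] Vr] Vr by simp
  also have "\<dots> = Vr * mat_diag n (\<lambda>i. 1 - lam i)"
    using Vr by (intro eq_matI) (auto simp: mat_diag_mult_right algebra_simps)
  finally show ?thesis .
qed

lemma smoother_pow_mult_Vr: "smoother ^\<^sub>m k * Vr = Vr * mat_diag n (\<lambda>i. (1 - lam i) ^ k)"
proof (induction k)
  case 0
  then show ?case using Vr smoother_carrier by simp
next
  case (Suc k)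
  have "smoother ^\<^sub>m Suc k * Vr = smoother ^\<^sub>m k * (smoother * Vr)"
    using smoother_carrier Vr by (simp add: assoc_mult_mat[of _ n n _ n _ n])
  also have "\<dots> = (smoother ^\<^sub>m k * Vr) * mat_diag n (\<lambda>i. 1 - lam i)"
    unfolding smoother_mult_Vr using smoother_carrier Vr by (simp add: assoc_mult_mat[of _ n n _ n _ n])
  also have "\<dots> = Vr * mat_diag n (\<lambda>i. (1 - lam i) ^ Suc k)"
    unfolding Suc using Vr by (simp add: assoc_mult_mat[of _ n n _ n _ n] mult.commute)
  finally show ?case .
qed

lemma smoother_pow_mult_Vr_vec:
  assumes c: "c \<in> carrier_vec n"
  shows "smoother ^\<^sub>m k *\<^sub>v (Vr *\<^sub>v c) = Vr *\<^sub>v (mat_diag n (\<lambda>i. (1 - lam i) ^ k) *\<^sub>v c)"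
  using smoother_pow_mult_Vr[of k] smoother_carrier Vr c
  by (simp flip: assoc_mult_mat_vec[of _ n n _ n])

lemma E_TG_eq: "E_TG A M \<nu>1 \<nu>2 P R = smoother ^\<^sub>m \<nu>2 * (1\<^sub>m n - PiPR A P R) * smoother ^\<^sub>m \<nu>1"
  using A unfolding E_TG_def Let_def by simp

lemma one_minus_PiPR_carrier: "P \<in> carrier_mat n k \<Longrightarrow> 1\<^sub>m n - PiPR A P R \<in> carrier_mat n n"
  using PiPR_carrier[OF A] by (rule minus_carrier_mat)

lemma E_TG_carrier: "P \<in> carrier_mat n k \<Longrightarrow> E_TG A M \<nu>1 \<nu>2 P R \<in> carrier_mat n n"
  unfolding E_TG_eq using smoother_carrier
  by (intro mult_carrier_mat[of _ n n _ n] one_minus_PiPR_carrier pow_carrier_mat)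

lemma E_TG_mult_vec:
  assumes P: "P \<in> carrier_mat n k" and x: "x \<in> carrier_vec n"
  shows "E_TG A M \<nu>1 \<nu>2 P R *\<^sub>v x
    = smoother ^\<^sub>m \<nu>2 *\<^sub>v (smoother ^\<^sub>m \<nu>1 *\<^sub>v x - PiPR A P R *\<^sub>v (smoother ^\<^sub>m \<nu>1 *\<^sub>v x))"
proof -
  note Pi = PiPR_carrier[OF A P] one_minus_PiPR_carrier[OF P]
  have "E_TG A M \<nu>1 \<nu>2 P R *\<^sub>v x
      = smoother ^\<^sub>m \<nu>2 *\<^sub>v ((1\<^sub>m n - PiPR A P R) *\<^sub>v (smoother ^\<^sub>m \<nu>1 *\<^sub>v x))"
    unfolding E_TG_eq using smoother_carrier Pi x by (intro assoc_mult_mat_vec3) auto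
  moreover have y: "smoother ^\<^sub>m \<nu>1 *\<^sub>v x \<in> carrier_vec n"
    by (rule mult_mat_vec_carrier[OF pow_carrier_mat[OF smoother_carrier] x])
  ultimately show ?thesis
    using minus_mult_distrib_mat_vec[OF one_carrier_mat PiPR_carrier[OF A P] y] y by simp
qed

lemma E_TG_eigen_witness:
  assumes P: "P \<in> carrier_mat n k" and R: "R \<in> carrier_mat n k"
    and inv: "invertible_mat (mat_adjoint R * A * P)" and k: "k < n"
  obtains c where "c \<in> carrier_vec n" "Vr *\<^sub>v c \<noteq> 0\<^sub>v n" "\<And>i. k < i \<Longrightarrow> i < n \<Longrightarrow> c $ i = 0"
    "E_TG A M \<nu>1 \<nu>2 P R *\<^sub>v (Vr *\<^sub>v c) = Vr *\<^sub>v (mat_diag n (\<lambda>i. (1 - lam i) ^ (\<nu>1 + \<nu>2)) *\<^sub>v c)"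
proof -
  \<comment> \<open>k conditions on the k + 1 coefficients of x = Vr c along the first right eigenvectors:
    some x \<noteq> 0 has S^\<nu>1 x in the kernel of R^* A, so the coarse correction leaves it alone.\<close>
  note S1 = pow_carrier_mat[OF smoother_carrier, of \<nu>1]
  note RAS = mult_carrier_mat[OF mult_carrier_mat[OF adjoint_carrier[THEN iffD2, OF R] A] S1]
  note Vk = mult_carrier_mat[OF Vr incl_mat_carrier[of n "Suc k"]]
  have "mat_adjoint R * A * smoother ^\<^sub>m \<nu>1 * (Vr * incl_mat n (Suc k)) \<in> carrier_mat k (Suc k)"
    using RAS Vk by (rule mult_carrier_mat)
  then obtain c0 where c0: "c0 \<in> carrier_vec (Suc k)" "c0 \<noteq> 0\<^sub>v (Suc k)"
    and ker: "mat_adjoint R * A * smoother ^\<^sub>m \<nu>1 * (Vr * incl_mat n (Suc k)) *\<^sub>v c0 = 0\<^sub>v k"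
    by (rule wide_mat_kernel) auto
  define c where "c = incl_mat n (Suc k) *\<^sub>v c0"
  have c_eq: "c = vec n (\<lambda>i. if i < Suc k then c0 $ i else 0)"
    unfolding c_def using c0 k by (simp add: incl_mat_mult_vec)
  have c: "c \<in> carrier_vec n" by (simp add: c_eq)
  have "c \<noteq> 0\<^sub>v n"
  proof
    assume c0_eq: "c = 0\<^sub>v n"
    have "c0 $ i = 0" if "i < Suc k" for i
    proof -
      have "c $ i = 0" using c0_eq that k by simp
      then show ?thesis using that k by (simp add: c_eq)
    qed
    with c0 show False by (auto intro!: eq_vecI)
  qed
  then have Vc: "Vr *\<^sub>v c \<noteq> 0\<^sub>v n"
    using invertible_mat_mult_vec_eq_zero[OF Vr Vr_inv c] by blast
  define w where "w = smoother ^\<^sub>m \<nu>1 *\<^sub>v (Vr *\<^sub>v c)"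
  have w: "w \<in> carrier_vec n"
    unfolding w_def by (intro mult_mat_vec_carrier[OF S1] mult_mat_vec_carrier[OF Vr c])
  have "Vr * incl_mat n (Suc k) *\<^sub>v c0 = Vr *\<^sub>v c"
    unfolding c_def by (rule assoc_mult_mat_vec[OF Vr incl_mat_carrier c0(1)])
  then have "mat_adjoint R *\<^sub>v (A *\<^sub>v w)
      = mat_adjoint R * A * smoother ^\<^sub>m \<nu>1 *\<^sub>v (Vr * incl_mat n (Suc k) *\<^sub>v c0)"
    unfolding w_def
    by (simp add: assoc_mult_mat_vec3[OF adjoint_carrier[THEN iffD2, OF R] A S1 mult_mat_vec_carrier[OF Vr c]])
  also have "\<dots> = 0\<^sub>v k"
    using ker RAS Vk c0 by (simp flip: assoc_mult_mat_vec)
  finally have "PiPR A P R *\<^sub>v w = 0\<^sub>v n"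
    by (rule PiPR_annihilates[OF A P R inv w])
  then have "E_TG A M \<nu>1 \<nu>2 P R *\<^sub>v (Vr *\<^sub>v c) = smoother ^\<^sub>m \<nu>2 *\<^sub>v w"
    using Vr c w by (simp add: E_TG_mult_vec[OF P] w_def[symmetric])
  also have "\<dots> = Vr *\<^sub>v (mat_diag n (\<lambda>i. (1 - lam i) ^ \<nu>2) *\<^sub>v (mat_diag n (\<lambda>i. (1 - lam i) ^ \<nu>1) *\<^sub>v c))"
    using c by (simp add: w_def smoother_pow_mult_Vr_vec mult_mat_vec_carrier[OF mat_diag_dim c])
  also have "\<dots> = Vr *\<^sub>v (mat_diag n (\<lambda>i. (1 - lam i) ^ (\<nu>1 + \<nu>2)) *\<^sub>v c)"
    using c by (simp add: mat_diag_mult_vec_mat_diag power_add mult.commute)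
  finally have "E_TG A M \<nu>1 \<nu>2 P R *\<^sub>v (Vr *\<^sub>v c)
      = Vr *\<^sub>v (mat_diag n (\<lambda>i. (1 - lam i) ^ (\<nu>1 + \<nu>2)) *\<^sub>v c)" .
  with c Vc show thesis by (intro that) (simp_all add: c_eq)
qed


abbreviation D_A :: "complex mat" where
  "D_A \<equiv> mat_adjoint Vl * A * Vr"

lemma D_A_carrier: "D_A \<in> carrier_mat n n"
  using Vl A Vr by auto

lemma D_A_eq_mat_diag: "D_A = mat_diag n (\<lambda>i. D_A $$ (i, i))"
  by (rule diagonal_mat_eq_mat_diag[OF D_A_carrier diagonal_AV])

lemma D_A_diag_nonzero:
  assumes i: "i < n"
  shows "D_A $$ (i, i) \<noteq> 0"
proof -
  have "invertible_mat D_A"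
    using Vl A Vr Vl_inv A_inv Vr_inv
    by (auto intro!: invertible_mat_mult[of _ n] invertible_mat_adjoint)
  then have "det D_A \<noteq> 0" using D_A_carrier by (simp add: invertible_mat_iff_det)
  then have "(\<Prod>j<n. D_A $$ (j, j)) \<noteq> 0"
    by (metis D_A_eq_mat_diag det_mat_diag)
  then show ?thesis using i by auto
qed

lemma sharp_coarse_invertible:
  assumes k: "k \<le> n" and P: "P \<in> carrier_mat n k" and R: "R \<in> carrier_mat n k"
    and P_range: "col_range P = span_first_cols Vr k"
    and R_range: "col_range R = span_first_cols Vl k"
  shows "invertible_mat (mat_adjoint R * A * P)"
proof -
  obtain Z where Z: "Z \<in> carrier_mat k k" "Vr * incl_mat n k = P * Z"
    using span_first_cols_factor[OF Vr k P P_range] by blast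
  obtain W where W: "W \<in> carrier_mat k k" "Vl * incl_mat n k = R * W"
    using span_first_cols_factor[OF Vl k R R_range] by blast
  have X: "mat_adjoint R * A * P \<in> carrier_mat k k" by (rule coarse_mat_carrier[OF A P R])
  note adjW = adjoint_carrier[THEN iffD2, OF W(1)] and adjR = adjoint_carrier[THEN iffD2, OF R]
  note RA = mult_carrier_mat[OF adjR A] and PZ = mult_carrier_mat[OF P Z(1)]
  have "mat_adjoint W * (mat_adjoint R * A * P) * Z = mat_adjoint W * (mat_adjoint R * A * (P * Z))"
    by (simp only: assoc_mult_mat[OF adjW X Z(1)] assoc_mult_mat[OF RA P Z(1)])
  also have "\<dots> = mat_adjoint W * mat_adjoint R * A * (P * Z)"
    by (simp only: assoc_mult_mat[OF adjW RA PZ, symmetric] assoc_mult_mat[OF adjW adjR A, symmetric])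
  also have "\<dots> = mat_adjoint (R * W) * A * (P * Z)"
    by (simp only: adjoint_mult[OF R W(1)])
  also have "\<dots> = mat_adjoint (incl_mat n k) * D_A * incl_mat n k"
  proof -
    note I = incl_mat_carrier[of n k] and adjI = adjoint_carrier[THEN iffD2, OF incl_mat_carrier[of n k]]
    note adjVl = adjoint_carrier[THEN iffD2, OF Vl]
    have "mat_adjoint (Vl * incl_mat n k) * A * (Vr * incl_mat n k)
        = mat_adjoint (incl_mat n k) * mat_adjoint Vl * A * Vr * incl_mat n k"
      using assoc_mult_mat[OF mult_carrier_mat[OF mult_carrier_mat[OF adjI adjVl] A] Vr I]
      by (simp only: adjoint_mult[OF Vl I])
    also have "\<dots> = mat_adjoint (incl_mat n k) * D_A * incl_mat n k"
      by (simp only: assoc_mult_mat[OF adjI adjVl A] assoc_mult_mat[OF adjI mult_carrier_mat[OF adjVl A] Vr])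
    finally show ?thesis
      unfolding W(2)[symmetric] Z(2)[symmetric] .
  qed
  also have "\<dots> = mat k k (\<lambda>(i, j). D_A $$ (i, j))"
    using D_A_carrier k
    by (simp add: adjoint_incl_mat_mult mult_incl_mat[of _ k n]) (intro eq_matI; simp)
  also have "\<dots> = mat_diag k (\<lambda>i. D_A $$ (i, i))"
  proof (rule eq_matI)
    fix i j assume "i < dim_row (mat_diag k (\<lambda>i. D_A $$ (i, i)))" "j < dim_col (mat_diag k (\<lambda>i. D_A $$ (i, i)))"
    then have ij: "i < k" "j < k" by (simp_all add: mat_diag_def)
    then show "mat k k (\<lambda>(i, j). D_A $$ (i, j)) $$ (i, j) = mat_diag k (\<lambda>i. D_A $$ (i, i)) $$ (i, j)"
      using arg_cong[OF D_A_eq_mat_diag, of "\<lambda>X. X $$ (i, j)"] k by (simp add: mat_diag_def)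
  qed (simp_all add: mat_diag_def)
  finally have "det (mat_adjoint W * (mat_adjoint R * A * P) * Z) = (\<Prod>i<k. D_A $$ (i, i))"
    by (simp only: det_mat_diag)
  then have "det (mat_adjoint W) * det (mat_adjoint R * A * P) * det Z = (\<Prod>i<k. D_A $$ (i, i))"
    by (simp only: det_mult[OF mult_carrier_mat[OF adjW X] Z(1)] det_mult[OF adjW X])
  moreover have "(\<Prod>i<k. D_A $$ (i, i)) \<noteq> 0"
    using D_A_diag_nonzero k by auto
  ultimately show ?thesis
    using X by (auto simp: invertible_mat_iff_det)
qed

lemma sharp_projection_eigen:
  assumes k: "k \<le> n" and P: "P \<in> carrier_mat n k" and R: "R \<in> carrier_mat n k"
    and P_range: "col_range P = span_first_cols Vr k"
    and R_range: "col_range R = span_first_cols Vl k"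
    and d: "d \<in> carrier_vec n"
  shows "PiPR A P R *\<^sub>v (Vr *\<^sub>v d) = Vr *\<^sub>v vec n (\<lambda>i. if i < k then d $ i else 0)"
proof -
  note inv = sharp_coarse_invertible[OF k P R P_range R_range]
  obtain Z where Z: "Z \<in> carrier_mat k k" "Vr * incl_mat n k = P * Z"
    using span_first_cols_factor[OF Vr k P P_range] by blast
  obtain Y where Y: "Y \<in> carrier_mat k k" "R = Vl * incl_mat n k * Y"
    using span_first_cols_factor[OF Vl k R R_range] by blast
  define d1 where "d1 = vec n (\<lambda>i. if i < k then d $ i else 0)"
  define d2 where "d2 = vec n (\<lambda>i. if i < k then 0 else d $ i)"
  have d12: "d1 \<in> carrier_vec n" "d2 \<in> carrier_vec n" by (simp_all add: d1_def d2_def)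
  have "d = d1 + d2" using d by (intro eq_vecI) (auto simp: d1_def d2_def)
  then have "Vr *\<^sub>v d = Vr *\<^sub>v d1 + Vr *\<^sub>v d2" using mult_add_distrib_mat_vec[OF Vr d12] by simp
  moreover have "PiPR A P R *\<^sub>v (Vr *\<^sub>v d1) = Vr *\<^sub>v d1"
  proof -
    define dk where "dk = vec k (\<lambda>i. d $ i)"
    have "d1 = incl_mat n k *\<^sub>v dk"
      using k by (simp add: d1_def dk_def incl_mat_mult_vec) (intro eq_vecI; simp)
    then have "Vr *\<^sub>v d1 = P *\<^sub>v (Z *\<^sub>v dk)"
      using assoc_mult_mat_vec[OF Vr incl_mat_carrier, of dk] assoc_mult_mat_vec[OF P Z(1), of dk] Z(2)
      by (simp add: dk_def)
    then show ?thesis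
      using PiPR_fixes_range[OF A P R inv] Z(1) by (simp add: dk_def)
  qed
  moreover have "PiPR A P R *\<^sub>v (Vr *\<^sub>v d2) = 0\<^sub>v n"
  proof (rule PiPR_annihilates[OF A P R inv])
    show "Vr *\<^sub>v d2 \<in> carrier_vec n" using Vr d12 by simp
    note adjI = adjoint_carrier[THEN iffD2, OF incl_mat_carrier[of n k]]
    note adjVl = adjoint_carrier[THEN iffD2, OF Vl]
    have adjR: "mat_adjoint R = mat_adjoint Y * (mat_adjoint (incl_mat n k) * mat_adjoint Vl)"
      using Y Vl by (simp add: adjoint_mult[of _ n k] adjoint_mult[OF Vl incl_mat_carrier])
    have w: "A *\<^sub>v (Vr *\<^sub>v d2) \<in> carrier_vec n" using A Vr d12 by simp
    have "mat_adjoint R *\<^sub>v (A *\<^sub>v (Vr *\<^sub>v d2))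
        = mat_adjoint Y *\<^sub>v (mat_adjoint (incl_mat n k) *\<^sub>v (mat_adjoint Vl *\<^sub>v (A *\<^sub>v (Vr *\<^sub>v d2))))"
      unfolding adjR
      using assoc_mult_mat_vec[OF adjoint_carrier[THEN iffD2, OF Y(1)] mult_carrier_mat[OF adjI adjVl] w]
        assoc_mult_mat_vec[OF adjI adjVl w] by simp
    also have "mat_adjoint Vl *\<^sub>v (A *\<^sub>v (Vr *\<^sub>v d2)) = D_A *\<^sub>v d2"
      by (rule assoc_mult_mat_vec3[OF adjVl A Vr d12(2), symmetric])
    also have "D_A *\<^sub>v d2 = vec n (\<lambda>i. D_A $$ (i, i) * d2 $ i)"
      by (subst D_A_eq_mat_diag) (simp add: mat_diag_mult_vec d12)
    also have "mat_adjoint (incl_mat n k) *\<^sub>v \<dots> = 0\<^sub>v k"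
      using k by (simp add: adjoint_incl_mat_mult_vec) (intro eq_vecI; simp add: d2_def)
    finally show "mat_adjoint R *\<^sub>v (A *\<^sub>v (Vr *\<^sub>v d2)) = 0\<^sub>v k"
      using Y by simp
  qed
  ultimately show ?thesis
    using PiPR_carrier[OF A P] Vr d12
    by (simp add: mult_add_distrib_mat_vec[of _ n n] d1_def)
qed

lemma E_TG_sharp_eigen:
  assumes k: "k \<le> n" and P: "P \<in> carrier_mat n k" and R: "R \<in> carrier_mat n k"
    and P_range: "col_range P = span_first_cols Vr k"
    and R_range: "col_range R = span_first_cols Vl k"
    and c: "c \<in> carrier_vec n"
  shows "E_TG A M \<nu>1 \<nu>2 P R *\<^sub>v (Vr *\<^sub>v c)
    = Vr *\<^sub>v (mat_diag n (\<lambda>i. if i < k then 0 else (1 - lam i) ^ (\<nu>1 + \<nu>2)) *\<^sub>v c)"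
proof -
  define d where "d = mat_diag n (\<lambda>i. (1 - lam i) ^ \<nu>1) *\<^sub>v c"
  have d: "d \<in> carrier_vec n" unfolding d_def by (rule mult_mat_vec_carrier[OF mat_diag_dim c])
  have "smoother ^\<^sub>m \<nu>1 *\<^sub>v (Vr *\<^sub>v c) - PiPR A P R *\<^sub>v (smoother ^\<^sub>m \<nu>1 *\<^sub>v (Vr *\<^sub>v c))
      = Vr *\<^sub>v d - Vr *\<^sub>v vec n (\<lambda>i. if i < k then d $ i else 0)"
    using c by (simp add: smoother_pow_mult_Vr_vec d_def[symmetric]
        sharp_projection_eigen[OF k P R P_range R_range d])
  also have "\<dots> = Vr *\<^sub>v (d - vec n (\<lambda>i. if i < k then d $ i else 0))"
    by (rule mult_minus_distrib_mat_vec[OF Vr d, symmetric]) simp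
  also have "d - vec n (\<lambda>i. if i < k then d $ i else 0) = vec n (\<lambda>i. if i < k then 0 else d $ i)"
    using d by (intro eq_vecI) auto
  finally have "E_TG A M \<nu>1 \<nu>2 P R *\<^sub>v (Vr *\<^sub>v c)
      = smoother ^\<^sub>m \<nu>2 *\<^sub>v (Vr *\<^sub>v vec n (\<lambda>i. if i < k then 0 else d $ i))"
    using Vr c by (simp add: E_TG_mult_vec[OF P])
  also have "\<dots> = Vr *\<^sub>v (mat_diag n (\<lambda>i. (1 - lam i) ^ \<nu>2) *\<^sub>v vec n (\<lambda>i. if i < k then 0 else d $ i))"
    by (rule smoother_pow_mult_Vr_vec) simp
  also have "mat_diag n (\<lambda>i. (1 - lam i) ^ \<nu>2) *\<^sub>v vec n (\<lambda>i. if i < k then 0 else d $ i)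
      = mat_diag n (\<lambda>i. if i < k then 0 else (1 - lam i) ^ (\<nu>1 + \<nu>2)) *\<^sub>v c"
    using c by (intro eq_vecI) (auto simp: mat_diag_mult_vec d_def power_add)
  finally show ?thesis .
qed

lemma E_TG_norm_lower_bound:
  assumes B: "B \<in> carrier_mat n n" "invertible_mat B" and BV: "B * Vr = mat_diag n u"
    and order: "\<And>i j. i \<le> j \<Longrightarrow> j < n \<Longrightarrow> cmod (1 - lam j) \<le> cmod (1 - lam i)"
    and n: "0 < n" and P: "P \<in> carrier_mat n k" and R: "R \<in> carrier_mat n k"
    and inv: "invertible_mat (mat_adjoint R * A * P)"
  shows "(if k < n then cmod (1 - lam k) ^ (\<nu>1 + \<nu>2) else 0)
    \<le> mnormN (mat_adjoint B * B) (E_TG A M \<nu>1 \<nu>2 P R)"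
proof (cases "k < n")
  case True
  obtain c where c: "c \<in> carrier_vec n" "Vr *\<^sub>v c \<noteq> 0\<^sub>v n" "\<And>i. k < i \<Longrightarrow> i < n \<Longrightarrow> c $ i = 0"
    and Ec: "E_TG A M \<nu>1 \<nu>2 P R *\<^sub>v (Vr *\<^sub>v c)
      = Vr *\<^sub>v (mat_diag n (\<lambda>i. (1 - lam i) ^ (\<nu>1 + \<nu>2)) *\<^sub>v c)"
    using E_TG_eigen_witness[OF P R inv True] by blast
  have "cmod (1 - lam k) ^ (\<nu>1 + \<nu>2) \<le> mnormN (mat_adjoint B * B) (E_TG A M \<nu>1 \<nu>2 P R)"
  proof (rule mnormN_ge_eigen[OF B Vr BV E_TG_carrier[OF P] c(1,2) Ec])
    fix i assume "i < n" "c $ i \<noteq> 0"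
    then have "i \<le> k" using c(3) not_le by blast
    then show "cmod (1 - lam k) ^ (\<nu>1 + \<nu>2) \<le> cmod ((1 - lam i) ^ (\<nu>1 + \<nu>2))"
      using order True by (simp add: norm_power power_mono)
  qed simp
  then show ?thesis using True by simp
next
  case False
  have "0 \<le> mnormN (mat_adjoint B * B) (E_TG A M \<nu>1 \<nu>2 P R)"
    by (rule mnormN_gram_ge[OF B E_TG_carrier[OF P], of "unit_vec n 0"]) (use n in auto)
  then show ?thesis using False by simp
qed

lemma E_TG_sharp_norm_upper_bound:
  assumes B: "B \<in> carrier_mat n n" "invertible_mat B" and BV: "B * Vr = mat_diag n u"
    and order: "\<And>i j. i \<le> j \<Longrightarrow> j < n \<Longrightarrow> cmod (1 - lam j) \<le> cmod (1 - lam i)"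
    and n: "0 < n" and k: "k \<le> n" and P: "P \<in> carrier_mat n k" and R: "R \<in> carrier_mat n k"
    and P_range: "col_range P = span_first_cols Vr k"
    and R_range: "col_range R = span_first_cols Vl k"
  shows "mnormN (mat_adjoint B * B) (E_TG A M \<nu>1 \<nu>2 P R)
    \<le> (if k < n then cmod (1 - lam k) ^ (\<nu>1 + \<nu>2) else 0)"
proof (rule mnormN_le_eigen[OF B Vr Vr_inv BV E_TG_carrier[OF P]
      E_TG_sharp_eigen[OF k P R P_range R_range] _ n])
  fix i assume "i < n"
  then show "cmod (if i < k then 0 else (1 - lam i) ^ (\<nu>1 + \<nu>2))
      \<le> (if k < n then cmod (1 - lam k) ^ (\<nu>1 + \<nu>2) else 0)"
    using order[of k i] by (auto simp: norm_power intro!: power_mono)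
qed

end

theorem theorem3p5:
  fixes n nc :: nat and A M Vr Vl Psh Rsh :: "complex mat"
    and lam u :: "nat \<Rightarrow> complex" and \<nu>1 \<nu>2 :: nat
  assumes A: "A \<in> carrier_mat n n" and M: "M \<in> carrier_mat n n"
    and Ainv: "invertible_mat A" and Minv: "invertible_mat M"
    and diag1: "diagonalizable (minv M * A)"
    and diag2: "diagonalizable (minv (mat_adjoint M) * mat_adjoint A)"
    and Vr: "Vr \<in> carrier_mat n n" and Vl: "Vl \<in> carrier_mat n n"
    and Vr_inv: "invertible_mat Vr" and Vl_inv: "invertible_mat Vl"
    and right_eig: "A * Vr = M * Vr * mat_diag n lam"
    and left_eig: "mat_adjoint Vl * A = mat_diag n lam * mat_adjoint Vl * M"
    and diagA: "diagonal_mat (mat_adjoint Vl * A * Vr)"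
    and diagM: "diagonal_mat (mat_adjoint Vl * M * Vr)"
    and order: "\<forall>i j. i \<le> j \<and> j < n \<longrightarrow> cmod (1 - lam j) \<le> cmod (1 - lam i)"
    and nc: "1 \<le> nc" "nc \<le> n"
    and Psh: "Psh \<in> carrier_mat n nc" and Rsh: "Rsh \<in> carrier_mat n nc"
    and Psh_range: "col_range Psh = span_first_cols Vr nc"
    and Rsh_range: "col_range Rsh = span_first_cols Vl nc"
    and u: "\<forall>j<n. u j \<noteq> 0"
  shows "let D = mat_diag n u;
             N = mat_adjoint (minv Vr) * mat_adjoint D * D * minv Vr
         in invertible_mat (mat_adjoint Rsh * A * Psh)
            \<and> (\<forall>P \<in> carrier_mat n nc. \<forall>R \<in> carrier_mat n nc.
                  invertible_mat (mat_adjoint R * A * P) \<longrightarrow>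
                  mnormN N (E_TG A M \<nu>1 \<nu>2 Psh Rsh) \<le> mnormN N (E_TG A M \<nu>1 \<nu>2 P R))
            \<and> mnormN N (E_TG A M \<nu>1 \<nu>2 Psh Rsh) =
                (if nc < n then cmod (1 - lam nc) ^ (\<nu>1 + \<nu>2) else 0)"
proof -
  interpret pencil_eigenbases n A M Vr Vl lam
    using A M Ainv Minv Vr Vl Vr_inv Vl_inv right_eig diagA by unfold_locales
  obtain B where B: "B \<in> carrier_mat n n" "invertible_mat B" and BV: "B * Vr = mat_diag n u"
    and N: "mat_adjoint (minv Vr) * mat_adjoint (mat_diag n u) * mat_diag n u * minv Vr
      = mat_adjoint B * B"
    using weighted_eigen_gram[OF Vr Vr_inv u] by blast
  have n: "0 < n" using nc by simp
  let ?bound = "if nc < n then cmod (1 - lam nc) ^ (\<nu>1 + \<nu>2) else 0"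
  have lower: "?bound \<le> mnormN (mat_adjoint B * B) (E_TG A M \<nu>1 \<nu>2 P R)"
    if "P \<in> carrier_mat n nc" "R \<in> carrier_mat n nc" "invertible_mat (mat_adjoint R * A * P)" for P R
    by (rule E_TG_norm_lower_bound[OF B BV _ n that]) (use order in auto)
  have upper: "mnormN (mat_adjoint B * B) (E_TG A M \<nu>1 \<nu>2 Psh Rsh) \<le> ?bound"
    by (rule E_TG_sharp_norm_upper_bound[OF B BV _ n nc(2) Psh Rsh Psh_range Rsh_range])
      (use order in auto)
  have sharp_inv: "invertible_mat (mat_adjoint Rsh * A * Psh)"
    by (rule sharp_coarse_invertible[OF nc(2) Psh Rsh Psh_range Rsh_range])
  show ?thesis
    unfolding Let_def N
    using sharp_inv lower[OF Psh Rsh sharp_inv] upper by (auto intro: order_trans[OF upper] lower)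
qed

end
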